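(* Fix $k\ge3$, $c>0$ and $\zeta\in(0,1]$ with $\zeta(k-1)c^{k-1}<e$. Let $F=F^{(k)}_{c,\zeta}$. Then for all bounded measurable $f,g:[0,1]\to\mathbb R_{>0}$, $$\|\log F^2(f)-\log F^2(g)\|_\infty\le(1-\delta)\|\log f-\log g\|_\infty,\qquad\delta=1-\zeta c^{k-1}(k-1)e^{-1}.$$
   Context: $\alpha_k=\frac12\sum_{i=1}^k\min\left(\frac1{i-1},\frac1{k-i}\right)$ (with $1/0=+\infty$). For $\ell\in\{1,\dots,k\}$, $I_\ell=\{-\ell+1,\dots,k-\ell\}\setminus\{0\}$ and $w(t,\ell)=\min\{\frac t{\ell-1},\frac{1-t}{k-\ell}\}$ (quotients by $0$ are $+\infty$). The operator $F^{(k)}_{c,\zeta}$ on bounded measurable $f:[0,1]\to\mathbb R_{>0}$ is $F^{(k)}_{c,\zeta}f(t)=c\exp\left[-\frac{\zeta}{\alpha_k}\sum_{\ell=1}^k\int_0^{w(t,\ell)}\prod_{i\in I_\ell}f(t+is)\,ds\right]$. $F^2=F\circ F$; $\|\cdot\|_\infty$ is the supremum norm. *)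

theory Defs
  imports "HOL-Analysis.Analysis"
begin

text \<open>Quotients by 0 are +infinity; we realise min(1/0, x) = x explicitly.\<close>

definition alpha_k :: "nat \<Rightarrow> real" where
  "alpha_k k = (1/2) * (\<Sum>i=1..k.
     (if i = 1 \<and> k = i then 0
      else if i = 1 then 1 / real (k - i)
      else if k = i then 1 / real (i - 1)
      else min (1 / real (i - 1)) (1 / real (k - i))))"

definition wfun :: "nat \<Rightarrow> real \<Rightarrow> nat \<Rightarrow> real" where
  "wfun k t l =
     (if l = 1 then (1 - t) / real (k - l)
      else if l = k then t / real (l - 1)
      else min (t / real (l - 1)) ((1 - t) / real (k - l)))"

definition Iset :: "nat \<Rightarrow> nat \<Rightarrow> int set" where
  "Iset k l = {1 - int l .. int k - int l} - {0}"

definition Fop :: "nat \<Rightarrow> real \<Rightarrow> real \<Rightarrow> (real \<Rightarrow> real) \<Rightarrow> real \<Rightarrow> real" where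
  "Fop k c \<zeta> f t = c * exp (- (\<zeta> / alpha_k k) *
     (\<Sum>l=1..k. set_lebesgue_integral lborel {0 .. wfun k t l}
        (\<lambda>s. \<Prod>i\<in>Iset k l. f (t + real_of_int i * s))))"

definition supnorm01 :: "(real \<Rightarrow> real) \<Rightarrow> ereal" where
  "supnorm01 h = (SUP t\<in>{0..1}. ereal \<bar>h t\<bar>)"

definition admissible :: "(real \<Rightarrow> real) \<Rightarrow> bool" where
  "admissible f \<longleftrightarrow> (\<forall>t\<in>{0..1}. f t > 0) \<and> bounded (f ` {0..1})
     \<and> f \<in> borel_measurable (restrict_space lborel {0..1})"

end

theory Submission
  imports Defs
begin

text \<open>Write F h = c exp (- B h) with B h = (\<zeta> / \<alpha>_k) S h, where S h t is the sum over l of the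
  integrals of the products of h (t + i s), i \<in> I_l, over 0 \<le> s \<le> w(t,l). If
  |log f - log g| \<le> d, then f \<le> e^d g, and since each product has k - 1 factors,
  B f \<le> e^m B g and B g \<le> e^m B f with m = (k - 1) d. A product of k - 1 values of F h is
  c^(k-1) exp (- X h) with X h a sum of values of B h. As u \<mapsto> exp (- e^u) is 1/e-Lipschitz, the
  two-sided ratio bound between X f and X g gives |exp (- X f) - exp (- X g)| \<le> m / e.
  Integrating over s and summing over l costs a factor \<Sum>_l w(t,l) \<le> \<alpha>_k, which cancels the
  1/\<alpha>_k of the outer F, so that |log F(F f) - log F(F g)| \<le> \<zeta> c^(k-1) (k - 1) d / e.\<close>

section \<open>The weights w(t,l) and the constant \<alpha>_k\<close>

lemma shift_mem_unit_interval:
  assumes t: "t \<in> {0..1}" and l: "l \<in> {1..k}" and i: "i \<in> Iset k l"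
    and s: "s \<in> {0..wfun k t l}"
  shows "t + real_of_int i * s \<in> {0..1}"
proof -
  have i_lower: "1 - int l \<le> i" and i_upper: "i \<le> int k - int l" and "i \<noteq> 0"
    using i by (auto simp: Iset_def)
  have s0: "0 \<le> s" and sw: "s \<le> wfun k t l" using s by auto
  show ?thesis
  proof (cases "i < 0")
    case True
    then have l2: "l \<ge> 2" using i_lower by linarith
    have "wfun k t l \<le> t / real (l - 1)"
      using l2 by (auto simp: wfun_def)
    then have "real (l - 1) * wfun k t l \<le> t"
      using l2 by (simp add: pos_le_divide_eq mult.commute)
    then have "real (l - 1) * s \<le> t"
      using sw by (smt (verit) mult_left_mono of_nat_0_le_iff)
    moreover have "- real (l - 1) * s \<le> real_of_int i * s"
      using i_lower s0 l2 by (intro mult_right_mono) (auto simp: of_nat_diff)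
    moreover have "real_of_int i * s \<le> 0" using True s0 by (simp add: mult_nonpos_nonneg)
    ultimately show ?thesis using t by simp
  next
    case False
    then have "i > 0" using \<open>i \<noteq> 0\<close> by simp
    then have lk: "l < k" using i_upper by linarith
    have "wfun k t l \<le> (1 - t) / real (k - l)"
      using lk by (auto simp: wfun_def)
    then have "real (k - l) * wfun k t l \<le> 1 - t"
      using lk by (simp add: pos_le_divide_eq mult.commute)
    then have "real (k - l) * s \<le> 1 - t"
      using sw by (smt (verit) mult_left_mono of_nat_0_le_iff)
    moreover have "real_of_int i * s \<le> real (k - l) * s"
      using i_upper s0 lk by (intro mult_right_mono) (auto simp: of_nat_diff)
    moreover have "0 \<le> real_of_int i * s" using \<open>i > 0\<close> s0 by simp
    ultimately show ?thesis using t by simp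
  qed
qed

lemma wfun_nonneg: "t \<in> {0..1} \<Longrightarrow> 0 \<le> wfun k t l"
  by (auto simp: wfun_def)

lemma finite_Iset: "finite (Iset k l)"
  by (simp add: Iset_def)

lemma card_Iset:
  assumes "l \<in> {1..k}"
  shows "card (Iset k l) = k - 1"
proof -
  have "(0::int) \<in> {1 - int l .. int k - int l}" using assms by auto
  then show ?thesis using assms by (simp add: Iset_def card_Diff_singleton)
qed

definition alpha_summand :: "nat \<Rightarrow> nat \<Rightarrow> real" where
  "alpha_summand k i = (if i = 1 \<and> k = i then 0
      else if i = 1 then 1 / real (k - i)
      else if k = i then 1 / real (i - 1)
      else min (1 / real (i - 1)) (1 / real (k - i)))"

lemma alpha_k_eq_sum_alpha_summand: "alpha_k k = (1/2) * (\<Sum>i=1..k. alpha_summand k i)"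
  unfolding alpha_k_def alpha_summand_def by simp

lemma min_mult_add_min_mult_le:
  fixes a b t :: real
  assumes "0 \<le> t" "t \<le> 1"
  shows "min (t * a) ((1 - t) * b) + min (t * b) ((1 - t) * a) \<le> min a b"
proof (cases "a \<le> b")
  case True
  have "min (t * a) ((1 - t) * b) + min (t * b) ((1 - t) * a) \<le> t * a + (1 - t) * a" by linarith
  then show ?thesis using True by (simp add: algebra_simps)
next
  case False
  have "min (t * a) ((1 - t) * b) + min (t * b) ((1 - t) * a) \<le> (1 - t) * b + t * b" by linarith
  then show ?thesis using False by (simp add: algebra_simps)
qed

lemma wfun_add_wfun_reflect_le:
  assumes k: "k \<ge> 3" and t: "t \<in> {0..1}" and l: "l \<in> {1..k}"
  shows "wfun k t l + wfun k t (k + 1 - l) \<le> alpha_summand k l"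
proof -
  consider "l = 1" | "l = k" | "l \<noteq> 1" "l \<noteq> k" by blast
  then show ?thesis
  proof cases
    case 3
    have "k + 1 - l \<noteq> 1" "k + 1 - l \<noteq> k"
      "real (k + 1 - l - 1) = real (k - l)" "real (k - (k + 1 - l)) = real (l - 1)"
      using 3 l by (auto simp: of_nat_diff)
    then have "wfun k t l + wfun k t (k + 1 - l) =
       min (t * (1 / real (l - 1))) ((1 - t) * (1 / real (k - l))) +
       min (t * (1 / real (k - l))) ((1 - t) * (1 / real (l - 1)))"
      using 3 by (simp add: wfun_def)
    also have "\<dots> \<le> min (1 / real (l - 1)) (1 / real (k - l))"
      using t by (intro min_mult_add_min_mult_le) auto
    finally show ?thesis using 3 by (simp add: alpha_summand_def)
  qed (use k in \<open>simp_all add: wfun_def alpha_summand_def add_divide_distrib[symmetric]\<close>)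
qed

lemma sum_wfun_le_alpha_k:
  assumes k: "k \<ge> 3" and t: "t \<in> {0..1}"
  shows "(\<Sum>l=1..k. wfun k t l) \<le> alpha_k k"
proof -
  have reflect: "(\<Sum>l=1..k. wfun k t l) = (\<Sum>l=1..k. wfun k t (k + 1 - l))"
    using sum.atLeastAtMost_rev[of "wfun k t" 1 k] by simp
  have "2 * (\<Sum>l=1..k. wfun k t l) = (\<Sum>l=1..k. wfun k t l + wfun k t (k + 1 - l))"
    by (subst sum.distrib, subst reflect[symmetric]) simp
  also have "\<dots> \<le> (\<Sum>l=1..k. alpha_summand k l)"
    by (intro sum_mono wfun_add_wfun_reflect_le[OF k t]) simp
  finally show ?thesis unfolding alpha_k_eq_sum_alpha_summand by simp
qed

lemma alpha_k_pos:
  assumes k: "k \<ge> 3" shows "alpha_k k > 0"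
proof -
  have "0 < wfun k 0 1" using k by (simp add: wfun_def)
  also have "\<dots> \<le> (\<Sum>l=1..k. wfun k 0 l)"
    using k by (intro member_le_sum wfun_nonneg) auto
  also have "\<dots> \<le> alpha_k k" using sum_wfun_le_alpha_k[OF k] by simp
  finally show ?thesis .
qed

section \<open>An estimate for exp (- x)\<close>

lemma mult_exp_neg_le: "(x::real) * exp (- x) \<le> exp (-1)"
proof -
  have "x * exp (- x) \<le> exp (x - 1) * exp (- x)"
    using exp_ge_add_one_self[of "x - 1"] by (intro mult_right_mono) auto
  also have "\<dots> = exp (-1)" by (simp flip: exp_add)
  finally show ?thesis .
qed

lemma exp_neg_exp_lipschitz:
  fixes u v :: real
  shows "\<bar>exp (- exp u) - exp (- exp v)\<bar> \<le> exp (-1) * \<bar>u - v\<bar>"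
proof -
  define \<phi> where "\<phi> z = exp (- exp z)" for z :: real
  have "norm (\<phi> u - \<phi> v) \<le> exp (-1) * norm (u - v)"
  proof (rule field_differentiable_bound[where S = UNIV])
    show "(\<phi> has_field_derivative - (exp z * exp (- exp z))) (at z within UNIV)"
      for z :: real
      unfolding \<phi>_def by (auto intro!: derivative_eq_intros)
    show "norm (- (exp z * exp (- exp z))) \<le> exp (-1)" for z :: real
      using mult_exp_neg_le[of "exp z"] by simp
  qed auto
  then show ?thesis by (simp add: \<phi>_def)
qed

lemma abs_exp_neg_diff_le:
  fixes x y m :: real
  assumes "0 \<le> x" "0 \<le> y" "0 \<le> m" "x \<le> exp m * y" "y \<le> exp m * x"
  shows "\<bar>exp (- x) - exp (- y)\<bar> \<le> m * exp (-1)"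
proof (cases "x = 0 \<or> y = 0")
  case True
  then have "x = 0 \<and> y = 0" using assms by (auto simp: mult_le_0_iff)
  then show ?thesis using assms by simp
next
  case False
  then have pos: "x > 0" "y > 0" using assms by auto
  have "ln x \<le> ln (exp m * y)" "ln y \<le> ln (exp m * x)"
    using assms pos by simp_all
  then have "ln x \<le> m + ln y" "ln y \<le> m + ln x"
    using pos by (simp_all add: ln_mult)
  then have "\<bar>ln x - ln y\<bar> \<le> m" by linarith
  have "\<bar>exp (- x) - exp (- y)\<bar> = \<bar>exp (- exp (ln x)) - exp (- exp (ln y))\<bar>"
    using pos by simp
  also have "\<dots> \<le> exp (-1) * \<bar>ln x - ln y\<bar>" by (rule exp_neg_exp_lipschitz)
  also have "\<dots> \<le> exp (-1) * m" using \<open>\<bar>ln x - ln y\<bar> \<le> m\<close> by simp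
  finally show ?thesis by (simp add: mult.commute)
qed

section \<open>The exponent of F: measurability and integrability\<close>

definition Fop_integral :: "nat \<Rightarrow> (real \<Rightarrow> real) \<Rightarrow> real \<Rightarrow> real" where
  "Fop_integral k h t = (\<Sum>l=1..k. set_lebesgue_integral lborel {0..wfun k t l}
     (\<lambda>s. \<Prod>i\<in>Iset k l. h (t + real_of_int i * s)))"

lemma Fop_eq_exp_Fop_integral:
  "Fop k c \<zeta> h t = c * exp (- (\<zeta> / alpha_k k) * Fop_integral k h t)"
  by (simp add: Fop_def Fop_integral_def)

lemma Fop_integral_cong:
  assumes "\<And>x. x \<in> {0..1} \<Longrightarrow> h x = h' x" and t: "t \<in> {0..1}"
  shows "Fop_integral k h t = Fop_integral k h' t"
  unfolding Fop_integral_def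
proof (intro sum.cong refl set_lebesgue_integral_cong allI impI prod.cong)
  show "h (t + real_of_int i * s) = h' (t + real_of_int i * s)"
    if "l \<in> {1..k}" "s \<in> {0..wfun k t l}" "i \<in> Iset k l" for l s i
    using assms shift_mem_unit_interval[OF t that(1,3,2)] by simp
qed simp

lemma borel_measurable_wfun[measurable]: "(\<lambda>t. wfun k t l) \<in> borel_measurable borel"
  unfolding wfun_def by measurable

lemma borel_measurable_Fop_integral[measurable]:
  assumes [measurable]: "h \<in> borel_measurable borel"
  shows "Fop_integral k h \<in> borel_measurable borel"
proof -
  have "(\<lambda>t. set_lebesgue_integral lborel {0..wfun k t l} (\<lambda>s. \<Prod>i\<in>Iset k l. h (t + real_of_int i * s)))
      \<in> borel_measurable lborel" for l
    unfolding set_lebesgue_integral_def indicator_def atLeastAtMost_iff by measurable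
  then show ?thesis unfolding Fop_integral_def by measurable
qed

lemma admissible_extension_measurable:
  assumes "admissible h"
  shows "(\<lambda>x. indicator {0..1} x * h x) \<in> borel_measurable borel"
proof -
  have "h \<in> borel_measurable (restrict_space lborel {0..1})"
    using assms by (simp add: admissible_def)
  then have "(\<lambda>x. indicator {0..1} x *\<^sub>R h x) \<in> borel_measurable lborel"
    by (subst (asm) borel_measurable_restrict_space_iff) auto
  then show ?thesis by simp
qed

lemma admissible_bounded:
  assumes "admissible h"
  obtains M where "\<And>x. x \<in> {0..1} \<Longrightarrow> \<bar>h x\<bar> \<le> M"
proof -
  obtain M where "\<forall>y\<in>h ` {0..1}. norm y \<le> M"
    using assms by (auto simp: admissible_def bounded_iff)
  then show thesis by (intro that) auto
qed

lemma set_borel_measurable_shift_prod: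
  assumes h: "admissible h" and t: "t \<in> {0..1}" and l: "l \<in> {1..k}"
  shows "set_borel_measurable lborel {0..wfun k t l} (\<lambda>s. \<Prod>i\<in>Iset k l. h (t + real_of_int i * s))"
proof -
  define h' where "h' x = indicator {0..1} x * h x" for x
  have [measurable]: "h' \<in> borel_measurable borel"
    unfolding h'_def using admissible_extension_measurable[OF h] .
  have "(\<lambda>s. indicator {0..wfun k t l} s * (\<Prod>i\<in>Iset k l. h' (t + real_of_int i * s)))
      = (\<lambda>s. indicator {0..wfun k t l} s * (\<Prod>i\<in>Iset k l. h (t + real_of_int i * s)))"
  proof
    fix s
    show "indicator {0..wfun k t l} s * (\<Prod>i\<in>Iset k l. h' (t + real_of_int i * s))
      = indicator {0..wfun k t l} s * (\<Prod>i\<in>Iset k l. h (t + real_of_int i * s))"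
    proof (cases "s \<in> {0..wfun k t l}")
      case True
      then show ?thesis
        using shift_mem_unit_interval[OF t l _ True] by (auto simp: h'_def intro!: prod.cong)
    qed simp
  qed
  moreover have "(\<lambda>s. indicator {0..wfun k t l} s * (\<Prod>i\<in>Iset k l. h' (t + real_of_int i * s)))
      \<in> borel_measurable lborel"
    by measurable
  ultimately show ?thesis by (simp add: set_borel_measurable_def)
qed

lemma set_integrable_shift_prod:
  assumes h: "admissible h" and t: "t \<in> {0..1}" and l: "l \<in> {1..k}"
  shows "set_integrable lborel {0..wfun k t l} (\<lambda>s. \<Prod>i\<in>Iset k l. h (t + real_of_int i * s))"
proof -
  obtain M where M: "\<And>x. x \<in> {0..1} \<Longrightarrow> \<bar>h x\<bar> \<le> M"
    using admissible_bounded[OF h] by blast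
  then have "0 \<le> M" by force
  show ?thesis
  proof (rule set_integrable_bound[OF _ set_borel_measurable_shift_prod[OF h t l]])
    show "set_integrable lborel {0..wfun k t l} (\<lambda>_. M ^ card (Iset k l))"
      by (intro borel_integrable_atLeastAtMost' continuous_on_const)
    show "AE s in lborel. s \<in> {0..wfun k t l} \<longrightarrow>
        norm (\<Prod>i\<in>Iset k l. h (t + real_of_int i * s)) \<le> norm (M ^ card (Iset k l))"
    proof (intro AE_I2 impI)
      fix s assume s: "s \<in> {0..wfun k t l}"
      have "\<bar>\<Prod>i\<in>Iset k l. h (t + real_of_int i * s)\<bar> \<le> (\<Prod>i\<in>Iset k l. M)"
        unfolding abs_prod by (intro prod_mono) (auto intro: M shift_mem_unit_interval[OF t l _ s])
      then show "norm (\<Prod>i\<in>Iset k l. h (t + real_of_int i * s)) \<le> norm (M ^ card (Iset k l))"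
        using \<open>0 \<le> M\<close> by simp
    qed
  qed
qed

lemma Fop_integral_nonneg:
  assumes "\<And>x. x \<in> {0..1} \<Longrightarrow> 0 \<le> h x" and t: "t \<in> {0..1}"
  shows "0 \<le> Fop_integral k h t"
  unfolding Fop_integral_def set_lebesgue_integral_def
  by (intro sum_nonneg integral_nonneg_AE AE_I2)
    (auto simp: indicator_def intro!: prod_nonneg assms(1) shift_mem_unit_interval[OF t])

lemma admissible_Fop:
  assumes "c > 0" "0 \<le> \<zeta> / alpha_k k" and h: "admissible h"
  shows "admissible (Fop k c \<zeta> h)"
proof -
  have h_pos: "0 < h x" if "x \<in> {0..1}" for x
    using h that by (simp add: admissible_def)
  have "\<bar>Fop k c \<zeta> h t\<bar> \<le> c" if t: "t \<in> {0..1}" for t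
  proof -
    have "0 \<le> Fop_integral k h t"
      using h_pos t by (intro Fop_integral_nonneg) (auto intro: less_imp_le)
    then have "0 \<le> \<zeta> / alpha_k k * Fop_integral k h t"
      by (rule mult_nonneg_nonneg[OF assms(2)])
    then show ?thesis
      using \<open>c > 0\<close> by (simp add: Fop_eq_exp_Fop_integral abs_mult mult_left_le)
  qed
  then have bounded: "bounded (Fop k c \<zeta> h ` {0..1})"
    unfolding bounded_iff by (intro exI[of _ c]) auto
  define h' where "h' x = indicator {0..1} x * h x" for x
  have [measurable]: "h' \<in> borel_measurable borel"
    unfolding h'_def using admissible_extension_measurable[OF h] .
  have "Fop k c \<zeta> h' \<in> borel_measurable borel"
    unfolding Fop_eq_exp_Fop_integral by measurable
  then have "Fop k c \<zeta> h' \<in> borel_measurable (restrict_space lborel {0..1})"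
    by (simp add: measurable_restrict_space1)
  moreover have "Fop k c \<zeta> h' t = Fop k c \<zeta> h t" if "t \<in> {0..1}" for t
    unfolding Fop_eq_exp_Fop_integral
    using Fop_integral_cong[of h' h, OF _ that] by (simp add: h'_def)
  ultimately have "Fop k c \<zeta> h \<in> borel_measurable (restrict_space lborel {0..1})"
    using measurable_cong[of "restrict_space lborel {0..1}" "Fop k c \<zeta> h'" "Fop k c \<zeta> h"]
    by (simp add: space_restrict_space)
  then show ?thesis
    using bounded \<open>c > 0\<close> by (simp add: admissible_def Fop_eq_exp_Fop_integral)
qed

section \<open>Comparing F f with F g\<close>

lemma Fop_integral_le_scaled:
  assumes f: "admissible f" and g: "admissible g" and t: "t \<in> {0..1}"
    and fg: "\<And>x. x \<in> {0..1} \<Longrightarrow> f x \<le> K * g x"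
  shows "Fop_integral k f t \<le> K ^ (k - 1) * Fop_integral k g t"
  unfolding Fop_integral_def sum_distrib_left
proof (intro sum_mono)
  fix l assume l: "l \<in> {1..k}"
  have "set_lebesgue_integral lborel {0..wfun k t l} (\<lambda>s. \<Prod>i\<in>Iset k l. f (t + real_of_int i * s))
      \<le> set_lebesgue_integral lborel {0..wfun k t l} (\<lambda>s. K ^ (k - 1) * (\<Prod>i\<in>Iset k l. g (t + real_of_int i * s)))"
  proof (rule set_integral_mono)
    show "set_integrable lborel {0..wfun k t l} (\<lambda>s. K ^ (k - 1) * (\<Prod>i\<in>Iset k l. g (t + real_of_int i * s)))"
      by (intro set_integrable_mult_right set_integrable_shift_prod[OF g t l])
    fix s assume s: "s \<in> {0..wfun k t l}"
    have "(\<Prod>i\<in>Iset k l. f (t + real_of_int i * s)) \<le> (\<Prod>i\<in>Iset k l. K * g (t + real_of_int i * s))"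
      using f shift_mem_unit_interval[OF t l _ s]
      by (intro prod_mono) (auto simp: admissible_def less_imp_le intro: fg)
    also have "\<dots> = K ^ (k - 1) * (\<Prod>i\<in>Iset k l. g (t + real_of_int i * s))"
      by (simp add: prod.distrib card_Iset[OF l])
    finally show "(\<Prod>i\<in>Iset k l. f (t + real_of_int i * s)) \<le> K ^ (k - 1) * (\<Prod>i\<in>Iset k l. g (t + real_of_int i * s))" .
  qed (rule set_integrable_shift_prod[OF f t l])
  then show "set_lebesgue_integral lborel {0..wfun k t l} (\<lambda>s. \<Prod>i\<in>Iset k l. f (t + real_of_int i * s))
      \<le> K ^ (k - 1) * set_lebesgue_integral lborel {0..wfun k t l} (\<lambda>s. \<Prod>i\<in>Iset k l. g (t + real_of_int i * s))"
    by simp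
qed

lemma abs_set_integral_diff_le:
  fixes P Q :: "real \<Rightarrow> real"
  assumes P: "set_integrable lborel {a..b} P" and Q: "set_integrable lborel {a..b} Q" and "a \<le> b"
    and PQ: "\<And>s. s \<in> {a..b} \<Longrightarrow> \<bar>P s - Q s\<bar> \<le> C"
  shows "\<bar>(LINT s:{a..b}|lborel. P s) - (LINT s:{a..b}|lborel. Q s)\<bar> \<le> (b - a) * C"
proof -
  have "\<bar>(LINT s:{a..b}|lborel. P s) - (LINT s:{a..b}|lborel. Q s)\<bar> = \<bar>LINT s:{a..b}|lborel. P s - Q s\<bar>"
    by (simp add: set_integral_diff(2)[OF P Q])
  also have "\<dots> \<le> (LINT s:{a..b}|lborel. \<bar>P s - Q s\<bar>)"
    using set_integral_norm_bound[OF set_integral_diff(1)[OF P Q]] by simp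
  also have "\<dots> \<le> (LINT s:{a..b}|lborel. C)"
    using P Q PQ by (intro set_integral_mono set_integrable_abs set_integral_diff(1))
      (auto intro: borel_integrable_atLeastAtMost' continuous_on_const)
  also have "\<dots> = (b - a) * C"
    using \<open>a \<le> b\<close> by (simp add: set_integral_const)
  finally show ?thesis .
qed

lemma abs_Fop_integral_diff_le:
  assumes k: "k \<ge> 3" and f: "admissible f" and g: "admissible g" and t: "t \<in> {0..1}"
    and "0 \<le> C"
    and fg: "\<And>l s. l \<in> {1..k} \<Longrightarrow> s \<in> {0..wfun k t l} \<Longrightarrow>
      \<bar>(\<Prod>i\<in>Iset k l. f (t + real_of_int i * s)) - (\<Prod>i\<in>Iset k l. g (t + real_of_int i * s))\<bar> \<le> C"
  shows "\<bar>Fop_integral k f t - Fop_integral k g t\<bar> \<le> alpha_k k * C"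
proof -
  have "\<bar>Fop_integral k f t - Fop_integral k g t\<bar>
      \<le> (\<Sum>l=1..k. \<bar>set_lebesgue_integral lborel {0..wfun k t l} (\<lambda>s. \<Prod>i\<in>Iset k l. f (t + real_of_int i * s))
          - set_lebesgue_integral lborel {0..wfun k t l} (\<lambda>s. \<Prod>i\<in>Iset k l. g (t + real_of_int i * s))\<bar>)"
    unfolding Fop_integral_def sum_subtractf[symmetric] by (rule sum_abs)
  also have "\<dots> \<le> (\<Sum>l=1..k. (wfun k t l - 0) * C)"
    using wfun_nonneg[OF t]
    by (intro sum_mono abs_set_integral_diff_le set_integrable_shift_prod f g t fg)
  also have "\<dots> \<le> alpha_k k * C"
    using sum_wfun_le_alpha_k[OF k t] \<open>0 \<le> C\<close> by (simp add: sum_distrib_right[symmetric] mult_right_mono)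
  finally show ?thesis .
qed

lemma ln_Fop:
  "c > 0 \<Longrightarrow> ln (Fop k c \<zeta> h t) = ln c - \<zeta> / alpha_k k * Fop_integral k h t"
  by (simp add: Fop_eq_exp_Fop_integral ln_mult)

lemma prod_Fop:
  assumes "finite I"
  shows "(\<Prod>i\<in>I. Fop k c \<zeta> h (x i))
    = c ^ card I * exp (- (\<zeta> / alpha_k k * (\<Sum>i\<in>I. Fop_integral k h (x i))))"
  using assms
  by (simp add: Fop_eq_exp_Fop_integral prod.distrib sum_distrib_left exp_sum[symmetric] sum_negf)

lemma Fop_integral_le_exp_mult:
  assumes f: "admissible f" and g: "admissible g" and t: "t \<in> {0..1}"
    and d: "\<And>x. x \<in> {0..1} \<Longrightarrow> \<bar>ln (f x) - ln (g x)\<bar> \<le> d"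
  shows "Fop_integral k f t \<le> exp (real (k - 1) * d) * Fop_integral k g t"
proof -
  have "f x \<le> exp d * g x" if x: "x \<in> {0..1}" for x
  proof -
    have "0 < f x" "0 < g x" using f g x by (auto simp: admissible_def)
    then have "f x = exp (ln (f x))" by simp
    also have "\<dots> \<le> exp (d + ln (g x))" using d[OF x] by simp
    also have "\<dots> = exp d * g x" using \<open>0 < g x\<close> by (simp add: exp_add)
    finally show ?thesis .
  qed
  then have "Fop_integral k f t \<le> exp d ^ (k - 1) * Fop_integral k g t"
    by (rule Fop_integral_le_scaled[OF f g t])
  then show ?thesis by (simp add: exp_of_nat_mult)
qed

lemma abs_prod_Fop_diff_le:
  assumes k: "k \<ge> 3" and c: "c > 0" and "0 \<le> \<zeta>"
    and f: "admissible f" and g: "admissible g"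
    and d: "\<And>x. x \<in> {0..1} \<Longrightarrow> \<bar>ln (f x) - ln (g x)\<bar> \<le> d"
    and "finite I" and x: "\<And>i. i \<in> I \<Longrightarrow> x i \<in> {0..1}"
  shows "\<bar>(\<Prod>i\<in>I. Fop k c \<zeta> f (x i)) - (\<Prod>i\<in>I. Fop k c \<zeta> g (x i))\<bar>
    \<le> c ^ card I * (real (k - 1) * d * exp (-1))"
proof -
  define m where "m = real (k - 1) * d"
  have "0 \<le> d" using d[of 0] by auto
  then have "0 \<le> m" by (simp add: m_def)
  have "0 \<le> \<zeta> / alpha_k k" using \<open>0 \<le> \<zeta>\<close> alpha_k_pos[OF k] by simp
  define X where "X h = \<zeta> / alpha_k k * (\<Sum>i\<in>I. Fop_integral k h (x i))" for h
  have X_nonneg: "0 \<le> X h" if "admissible h" for h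
    unfolding X_def using that x \<open>0 \<le> \<zeta> / alpha_k k\<close>
    by (intro mult_nonneg_nonneg sum_nonneg Fop_integral_nonneg) (auto simp: admissible_def less_imp_le)
  have X_le: "X h \<le> exp m * X h'"
    if "admissible h" "admissible h'" "\<And>y. y \<in> {0..1} \<Longrightarrow> \<bar>ln (h y) - ln (h' y)\<bar> \<le> d"
    for h h'
  proof -
    have "(\<Sum>i\<in>I. Fop_integral k h (x i)) \<le> exp m * (\<Sum>i\<in>I. Fop_integral k h' (x i))"
      unfolding m_def sum_distrib_left using that x by (intro sum_mono Fop_integral_le_exp_mult)
    then have "\<zeta> / alpha_k k * (\<Sum>i\<in>I. Fop_integral k h (x i))
        \<le> \<zeta> / alpha_k k * (exp m * (\<Sum>i\<in>I. Fop_integral k h' (x i)))"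
      by (rule mult_left_mono) fact
    then show ?thesis unfolding X_def by (simp add: mult.left_commute)
  qed
  have "\<bar>exp (- X f) - exp (- X g)\<bar> \<le> m * exp (-1)"
    using d by (intro abs_exp_neg_diff_le X_nonneg X_le f g \<open>0 \<le> m\<close>) (auto simp: abs_minus_commute)
  then show ?thesis
    using c by (simp add: prod_Fop[OF \<open>finite I\<close>] X_def m_def abs_mult mult_left_mono
        flip: right_diff_distrib)
qed

lemma abs_ln_Fop2_diff_le:
  assumes k: "k \<ge> 3" and c: "c > 0" and "0 \<le> \<zeta>"
    and f: "admissible f" and g: "admissible g"
    and d: "\<And>x. x \<in> {0..1} \<Longrightarrow> \<bar>ln (f x) - ln (g x)\<bar> \<le> d" and t: "t \<in> {0..1}"
  shows "\<bar>ln (Fop k c \<zeta> (Fop k c \<zeta> f) t) - ln (Fop k c \<zeta> (Fop k c \<zeta> g) t)\<bar>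
    \<le> \<zeta> * c ^ (k - 1) * real (k - 1) * exp (-1) * d"
proof -
  have "alpha_k k > 0" by (rule alpha_k_pos[OF k])
  then have "0 \<le> \<zeta> / alpha_k k" using \<open>0 \<le> \<zeta>\<close> by simp
  have Ff: "admissible (Fop k c \<zeta> f)" and Fg: "admissible (Fop k c \<zeta> g)"
    using admissible_Fop[OF c \<open>0 \<le> \<zeta> / alpha_k k\<close>] f g by auto
  define C where "C = c ^ (k - 1) * (real (k - 1) * d * exp (-1))"
  have "0 \<le> d" using d[of 0] by auto
  then have "0 \<le> C" using c by (simp add: C_def)
  have "\<bar>Fop_integral k (Fop k c \<zeta> g) t - Fop_integral k (Fop k c \<zeta> f) t\<bar> \<le> alpha_k k * C"
  proof (rule abs_Fop_integral_diff_le[OF k Fg Ff t \<open>0 \<le> C\<close>])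
    fix l s assume l: "l \<in> {1..k}" and s: "s \<in> {0..wfun k t l}"
    have "\<bar>(\<Prod>i\<in>Iset k l. Fop k c \<zeta> g (t + real_of_int i * s))
        - (\<Prod>i\<in>Iset k l. Fop k c \<zeta> f (t + real_of_int i * s))\<bar>
        \<le> c ^ card (Iset k l) * (real (k - 1) * d * exp (-1))"
    proof (rule abs_prod_Fop_diff_le[OF k c \<open>0 \<le> \<zeta>\<close> g f _ finite_Iset])
      show "\<bar>ln (g x) - ln (f x)\<bar> \<le> d" if "x \<in> {0..1}" for x
        using d[OF that] by (simp add: abs_minus_commute)
    qed (rule shift_mem_unit_interval[OF t l _ s])
    then show "\<bar>(\<Prod>i\<in>Iset k l. Fop k c \<zeta> g (t + real_of_int i * s))
        - (\<Prod>i\<in>Iset k l. Fop k c \<zeta> f (t + real_of_int i * s))\<bar> \<le> C"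
      by (simp add: C_def card_Iset[OF l])
  qed
  then have "\<zeta> / alpha_k k * \<bar>Fop_integral k (Fop k c \<zeta> g) t - Fop_integral k (Fop k c \<zeta> f) t\<bar>
      \<le> \<zeta> / alpha_k k * (alpha_k k * C)"
    by (rule mult_left_mono) fact
  moreover have "ln (Fop k c \<zeta> (Fop k c \<zeta> f) t) - ln (Fop k c \<zeta> (Fop k c \<zeta> g) t)
      = \<zeta> / alpha_k k * (Fop_integral k (Fop k c \<zeta> g) t - Fop_integral k (Fop k c \<zeta> f) t)"
    by (simp add: ln_Fop[OF c] algebra_simps)
  ultimately show ?thesis
    using \<open>alpha_k k > 0\<close> \<open>0 \<le> \<zeta>\<close> by (simp add: abs_mult C_def mult_ac)
qed

lemma supnorm01_le_mult:
  assumes "q > 0"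
    and uv: "\<And>d t. (\<And>x. x \<in> {0..1} \<Longrightarrow> \<bar>u x\<bar> \<le> d) \<Longrightarrow> t \<in> {0..1} \<Longrightarrow> \<bar>v t\<bar> \<le> q * d"
  shows "supnorm01 v \<le> ereal q * supnorm01 u"
proof (cases "supnorm01 u")
  case (real d)
  have "\<bar>u x\<bar> \<le> d" if "x \<in> {0..1}" for x
    using SUP_upper[OF that, of "\<lambda>x. ereal \<bar>u x\<bar>"] real by (simp add: supnorm01_def)
  then have "supnorm01 v \<le> ereal (q * d)"
    unfolding supnorm01_def using uv by (intro SUP_least) simp
  then show ?thesis using real by simp
next
  case PInf
  then show ?thesis using \<open>q > 0\<close> by simp
next
  case MInf
  moreover have "ereal \<bar>u 0\<bar> \<le> supnorm01 u"
    unfolding supnorm01_def by (rule SUP_upper) simp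
  ultimately show ?thesis by simp
qed

theorem mainTheorem20:
  fixes k :: nat and c \<zeta> :: real and f g :: "real \<Rightarrow> real"
  assumes "k \<ge> 3" and "c > 0" and "0 < \<zeta>" and "\<zeta> \<le> 1"
    and "\<zeta> * real (k - 1) * c ^ (k - 1) < exp 1"
    and "admissible f" and "admissible g"
  shows "supnorm01 (\<lambda>t. ln (Fop k c \<zeta> (Fop k c \<zeta> f) t) - ln (Fop k c \<zeta> (Fop k c \<zeta> g) t))
    \<le> ereal (1 - (1 - \<zeta> * c ^ (k - 1) * real (k - 1) * exp (-1)))
       * supnorm01 (\<lambda>t. ln (f t) - ln (g t))"
proof -
  have "1 - (1 - \<zeta> * c ^ (k - 1) * real (k - 1) * exp (-1)) > 0"
    using assms(1-3) by simp
  then show ?thesis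
  proof (rule supnorm01_le_mult)
    show "\<bar>ln (Fop k c \<zeta> (Fop k c \<zeta> f) t) - ln (Fop k c \<zeta> (Fop k c \<zeta> g) t)\<bar>
        \<le> (1 - (1 - \<zeta> * c ^ (k - 1) * real (k - 1) * exp (-1))) * d"
      if "\<And>x. x \<in> {0..1} \<Longrightarrow> \<bar>ln (f x) - ln (g x)\<bar> \<le> d" and "t \<in> {0..1}" for d t
      using abs_ln_Fop2_diff_le[OF assms(1,2) less_imp_le[OF assms(3)] assms(6,7) that] by simp
  qed
qed

end
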